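(* For all $s\in\mathbb{C}$ with $\Re(s)>1$, \[\sum_{n=1}^{\infty}\frac{1}{n^{s}}\cdot\frac{1}{\omega(n)+1}\Big[\sum_{p\ \text{prime}}\frac{1}{p^{s}}+\frac{1}{\omega(n)}\sum_{p\mid n}\frac{1}{p^{s}}\Big]=\zeta(s)-1,\] with the convention that for $n=1$ the term $\frac{1}{\omega(n)}\sum_{p\mid n}p^{-s}$ (an empty sum) is $0$.
   Context: $\omega(n)$ is the number of distinct prime divisors of $n$; the sum $\sum_{p\mid n}$ runs over the primes dividing $n$; $\zeta(s)=\sum_{n\ge1}n^{-s}$. *)

theory Defs
  imports "HOL-Analysis.Analysis" "HOL-Computational_Algebra.Primes"
begin

definition omega :: "nat \<Rightarrow> nat" where
  "omega n = card (prime_factors n)"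

text \<open>Riemann zeta for Re s > 1, as the value of its defining Dirichlet series.\<close>
definition zeta_series :: "complex \<Rightarrow> complex" where
  "zeta_series s = (\<Sum>n. 1 / (of_nat (Suc n)) powr s)"

end

theory Submission
  imports Defs
begin

text \<open>
  Both sides are evaluations of the absolutely convergent double series
  \<open>\<Sum> (np)^-s / \<omega>(np)\<close> over \<open>n \<ge> 1\<close> and primes \<open>p\<close>. Since \<open>\<omega>(np)\<close> is \<open>\<omega>(n)\<close> or \<open>\<omega>(n) + 1\<close>
  according as \<open>p\<close> divides \<open>n\<close> or not, summing over \<open>p\<close> first gives the \<open>n\<close>-th term of the
  left-hand side. Grouping instead by \<open>m = np\<close>, each \<open>m \<ge> 2\<close> occurs once for each of its
  \<open>\<omega>(m)\<close> prime factors and so contributes exactly \<open>m^-s\<close>, while \<open>m = 1\<close> does not occur.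
\<close>

lemma omega_eq_0_iff: "omega n = 0 \<longleftrightarrow> n \<le> 1"
proof
  assume "omega n = 0"
  show "n \<le> 1"
  proof (rule ccontr)
    assume "\<not> n \<le> 1"
    then obtain p where "prime p" "p dvd n"
      using prime_factor_nat[of n] by auto
    with \<open>\<not> n \<le> 1\<close> have "p \<in> prime_factors n"
      by (auto simp: in_prime_factors_iff)
    with \<open>omega n = 0\<close> show False
      by (simp add: omega_def)
  qed
qed (auto simp: omega_def le_Suc_eq)

lemma omega_mult_prime:
  assumes "n > 0" "prime p"
  shows "omega (n * p) = (if p dvd n then omega n else Suc (omega n))"
proof -
  have "prime_factors (n * p) = insert p (prime_factors n)"
    using assms by (subst prime_factors_product) (auto simp: prime_prime_factors)
  then show ?thesis
    using assms by (auto simp: omega_def in_prime_factors_iff insert_absorb)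
qed

lemma inverse_omega_mult_prime:
  assumes "n > 0" "prime p"
  shows "1 / of_nat (omega (n * p)) =
    (1 / of_nat (omega n + 1) :: 'a :: field_char_0) *
    (1 + (if p dvd n then 1 / of_nat (omega n) else 0))"
proof (cases "p dvd n")
  case True
  with assms have "p \<in> prime_factors n"
    by (auto simp: in_prime_factors_iff)
  then have "omega n \<noteq> 0"
    by (auto simp: omega_def)
  moreover have "(of_nat (omega n + 1) :: 'a) \<noteq> 0"
    using of_nat_neq_0 by simp
  ultimately show ?thesis
    using True assms by (simp add: omega_mult_prime field_simps)
qed (use assms in \<open>simp add: omega_mult_prime\<close>)

lemma sum_prime_factors_div_omega:
  "(\<Sum>p\<in>prime_factors m. x / of_nat (omega m)) = (if m \<le> 1 then 0 else x :: 'a :: field_char_0)"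
  using omega_eq_0_iff[of m] by (simp add: omega_def)

lemma has_sum_primes_div_omega_mult:
  fixes g :: "nat \<Rightarrow> 'a :: real_normed_field"
  assumes g: "(g has_sum P) {p. prime p}" and "n > 0"
  shows "((\<lambda>p. g p / of_nat (omega (n * p))) has_sum
    (1 / of_nat (omega n + 1)) * (P + 1 / of_nat (omega n) * (\<Sum>p\<in>prime_factors n. g p)))
    {p. prime p}"
proof -
  define c where "c = (1 / of_nat (omega n + 1) :: 'a)"
  have fin: "((\<lambda>p. if p \<in> prime_factors n then g p / of_nat (omega n) else 0) has_sum
      1 / of_nat (omega n) * (\<Sum>p\<in>prime_factors n. g p)) {p. prime p}"
    by (rule has_sum_finite_neutralI[of "prime_factors n"])
       (auto simp: in_prime_factors_iff sum_distrib_left)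
  have "((\<lambda>p. (g p + (if p \<in> prime_factors n then g p / of_nat (omega n) else 0)) * c) has_sum
      (P + 1 / of_nat (omega n) * (\<Sum>p\<in>prime_factors n. g p)) * c) {p. prime p}"
    by (intro has_sum_cmult_left has_sum_add g fin)
  moreover have "g p / of_nat (omega (n * p)) =
      (g p + (if p \<in> prime_factors n then g p / of_nat (omega n) else 0)) * c"
    if "prime p" for p
  proof -
    have "g p / of_nat (omega (n * p)) = g p * (1 / of_nat (omega (n * p)))"
      by simp
    also have "\<dots> = g p * (c * (1 + (if p dvd n then 1 / of_nat (omega n) else 0)))"
      unfolding c_def by (rule arg_cong[OF inverse_omega_mult_prime[OF \<open>n > 0\<close> that]])
    finally show ?thesis
      using that \<open>n > 0\<close> by (simp add: in_prime_factors_iff algebra_simps)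
  qed
  ultimately show ?thesis
    by (subst has_sum_cong[where g = "\<lambda>p. (g p + _ p) * c"]) (auto simp: c_def mult.commute)
qed

lemma has_sum_Sigma_prime_factors_iff:
  fixes f :: "nat \<times> nat \<Rightarrow> 'a :: topological_comm_monoid_add"
  shows "(f has_sum S) (SIGMA m:{0<..}. prime_factors m) \<longleftrightarrow>
    ((\<lambda>(n, p). f (n * p, p)) has_sum S) ({0<..} \<times> {p. prime p})"
  by (rule has_sum_reindex_bij_witness[symmetric,
        where i = "\<lambda>(m, p). (m div p, p)" and j = "\<lambda>(n, p). (n * p, p)"])
     (auto simp: in_prime_factors_iff prime_gt_0_nat div_greater_zero_iff dvd_imp_le)

lemma has_sum_Suc_iff: "((\<lambda>n. f (Suc n)) has_sum S) UNIV \<longleftrightarrow> (f has_sum S) {0<..}"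
proof -
  have "range Suc = {0<..}"
    by (auto simp: image_iff gr0_conv_Suc)
  then show ?thesis
    using has_sum_reindex[of Suc UNIV f S] by (simp add: comp_def)
qed

lemma summable_on_Times_mult:
  fixes f :: "'a \<Rightarrow> real" and g :: "'b \<Rightarrow> real"
  assumes "f summable_on A" "g summable_on B"
    and "\<And>x. x \<in> A \<Longrightarrow> f x \<ge> 0" "\<And>y. y \<in> B \<Longrightarrow> g y \<ge> 0"
  shows "(\<lambda>(x, y). f x * g y) summable_on A \<times> B"
  by (rule summable_on_SigmaI[where g = "\<lambda>x. f x * infsum g B"])
     (use assms in \<open>auto intro: has_sum_cmult_right has_sum_infsum summable_on_cmult_left\<close>)

lemma norm_inverse_nat_powr: "norm (1 / of_nat n powr s :: complex) = real n powr - Re s"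
  by (cases "n = 0") (simp_all add: norm_divide norm_powr_real_powr powr_minus inverse_eq_divide)

lemma inverse_nat_powr_mult:
  "1 / of_nat (m * n) powr s = (1 / of_nat m powr s) * (1 / of_nat n powr s :: complex)"
  by (simp add: powr_times_real)

lemma abs_summable_on_inverse_nat_powr:
  assumes "Re s > 1"
  shows "(\<lambda>n. norm (1 / of_nat n powr s :: complex)) summable_on A"
proof -
  have "summable (\<lambda>n. real n powr - Re s)"
    using assms by (subst summable_real_powr_iff) auto
  then have "(\<lambda>n. real n powr - Re s) summable_on UNIV"
    by (subst summable_on_UNIV_nonneg_real_iff) auto
  then show ?thesis
    unfolding norm_inverse_nat_powr by (rule summable_on_subset) auto
qed

lemma has_sum_zeta_series:
  assumes "Re s > 1"
  shows "((\<lambda>n. 1 / of_nat n powr s) has_sum zeta_series s) {0<..}"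
proof -
  have "(\<lambda>n. 1 / of_nat n powr s) summable_on {0<..}"
    using abs_summable_on_inverse_nat_powr[OF assms] by (simp add: summable_on_iff_abs_summable_on_complex)
  then obtain Z where Z: "((\<lambda>n. 1 / of_nat n powr s) has_sum Z) {0<..}"
    by (auto simp: summable_on_def)
  then have "(\<lambda>n. 1 / of_nat (Suc n) powr s) sums Z"
    by (intro has_sum_imp_sums has_sum_Suc_iff[THEN iffD2, OF Z])
  with Z show ?thesis
    by (simp add: zeta_series_def sums_iff)
qed

lemma norm_inverse_nat_powr_div_omega_mult_prime_le:
  assumes "n > 0" "prime p"
  shows "norm (1 / of_nat (n * p) powr s / of_nat (omega (n * p)) :: complex)
    \<le> norm (1 / of_nat n powr s :: complex) * norm (1 / of_nat p powr s :: complex)"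
proof -
  have "1 < p" "p \<le> n * p"
    using assms prime_gt_1_nat[of p] by simp_all
  then have "omega (n * p) \<noteq> 0"
    unfolding omega_eq_0_iff by linarith
  have "norm (1 / of_nat (n * p) powr s / of_nat (omega (n * p)) :: complex) =
      norm (1 / of_nat n powr s :: complex) * norm (1 / of_nat p powr s :: complex) /
      real (omega (n * p))"
    by (simp only: inverse_nat_powr_mult norm_divide norm_mult norm_of_nat)
  also have "\<dots> \<le> norm (1 / of_nat n powr s :: complex) * norm (1 / of_nat p powr s :: complex)"
    using \<open>omega (n * p) \<noteq> 0\<close> by (simp add: divide_le_eq mult_le_cancel_left1 mult_less_0_iff)
  finally show ?thesis .
qed

lemma summable_on_inverse_omega_mult_prime:
  assumes "Re s > 1"
  shows "(\<lambda>(n, p). 1 / of_nat (n * p) powr s / of_nat (omega (n * p)) :: complex)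
    summable_on {0<..} \<times> {p. prime p}"
proof -
  have "(\<lambda>(n, p). norm (1 / of_nat n powr s :: complex) * norm (1 / of_nat p powr s :: complex))
      summable_on {0<..} \<times> {p. prime p}"
    using abs_summable_on_inverse_nat_powr[OF assms] by (intro summable_on_Times_mult) auto
  then show ?thesis
    unfolding summable_on_iff_abs_summable_on_complex
    by (rule Infinite_Sum.abs_summable_on_comparison_test')
       (simp only: split_paired_all prod.case, rule norm_inverse_nat_powr_div_omega_mult_prime_le; simp)
qed

lemma has_sum_zeta_series_minus_1:
  assumes "Re s > 1"
  shows "((\<lambda>m. if m \<le> 1 then 0 else 1 / of_nat m powr s) has_sum (zeta_series s - 1)) {0<..}"
proof -
  have "((\<lambda>m. 1 / of_nat m powr s + (if m = 1 then - 1 else 0)) has_sum (zeta_series s + - 1)) {0<..}"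
    by (intro has_sum_add has_sum_zeta_series assms has_sum_finite_neutralI[of "{1}"]) auto
  then show ?thesis
    by (subst has_sum_cong[where g = "\<lambda>m. 1 / of_nat m powr s + (if m = 1 then - 1 else 0)"])
       (auto simp: le_Suc_eq)
qed

lemma has_sum_inverse_omega_mult_prime:
  assumes "Re s > 1"
  shows "((\<lambda>(n, p). 1 / of_nat (n * p) powr s / of_nat (omega (n * p))) has_sum (zeta_series s - 1))
    ({0<..} \<times> {p. prime p})"
proof -
  define f :: "nat \<times> nat \<Rightarrow> complex" where "f = (\<lambda>(m, p). 1 / of_nat m powr s / of_nat (omega m))"
  have f_mult: "(\<lambda>(n, p). f (n * p, p)) = (\<lambda>(n, p). 1 / of_nat (n * p) powr s / of_nat (omega (n * p)))"
    by (simp add: f_def)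
  have "f summable_on (SIGMA m:{0<..}. prime_factors m)"
    using summable_on_inverse_omega_mult_prime[OF assms]
    by (auto simp: summable_on_def has_sum_Sigma_prime_factors_iff f_mult)
  moreover have "((\<lambda>p. f (m, p)) has_sum (if m \<le> 1 then 0 else 1 / of_nat m powr s)) (prime_factors m)"
    for m
    using sum_prime_factors_div_omega[where m = m and x = "1 / of_nat m powr s"]
    by (intro has_sum_finite_neutralI[of "prime_factors m"]) (auto simp: f_def)
  ultimately have "(f has_sum (zeta_series s - 1)) (SIGMA m:{0<..}. prime_factors m)"
    using has_sum_zeta_series_minus_1[OF assms] by (intro has_sum_SigmaI)
  then show ?thesis
    by (simp add: has_sum_Sigma_prime_factors_iff f_mult)
qed

theorem mainTheorem18:
  fixes s :: complex
  assumes "Re s > 1"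
  shows "(\<lambda>m. let n = Suc m in
            (1 / (of_nat n) powr s) * (1 / of_nat (omega n + 1)) *
            ((\<Sum>\<^sub>\<infinity>p\<in>{p::nat. prime p}. 1 / (of_nat p) powr s)
             + (1 / of_nat (omega n)) * (\<Sum>p\<in>prime_factors n. 1 / (of_nat p) powr s)))
         sums (zeta_series s - 1)"
proof -
  define P where "P = (\<Sum>\<^sub>\<infinity>p\<in>{p::nat. prime p}. 1 / of_nat p powr s :: complex)"
  define T where "T = (\<lambda>n. (1 / of_nat n powr s) * (1 / of_nat (omega n + 1)) *
    (P + (1 / of_nat (omega n)) * (\<Sum>p\<in>prime_factors n. 1 / of_nat p powr s)))"
  have P: "((\<lambda>p. 1 / of_nat p powr s) has_sum P) {p. prime p}"
    using abs_summable_on_inverse_nat_powr[OF assms]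
    by (simp add: P_def summable_on_iff_abs_summable_on_complex)
  have inner: "((\<lambda>p. 1 / of_nat (n * p) powr s / of_nat (omega (n * p))) has_sum T n) {p. prime p}"
    if "n > 0" for n
    using has_sum_cmult_right[OF has_sum_primes_div_omega_mult[OF P that], of "1 / of_nat n powr s"]
    by (simp add: T_def powr_times_real mult.assoc)
  have "(T has_sum (zeta_series s - 1)) {0<..}"
    using has_sum_inverse_omega_mult_prime[OF assms]
    by (rule has_sum_Sigma') (simp only: prod.case, rule inner, simp)
  then have "(\<lambda>m. T (Suc m)) sums (zeta_series s - 1)"
    by (intro has_sum_imp_sums has_sum_Suc_iff[THEN iffD2])
  then show ?thesis
    by (simp add: T_def P_def Let_def)
qed

end
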